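(* Let $u_0\in C^1(\Omega_x)\cap\mathcal U$ and suppose $T>0$ is such that the classical solution $u(\cdot,t)=u_0\circ X^{-1}(\cdot,t)$, $t\in\Omega_t$, exists, where $X(x,t)=x+t\,F'(u_0(x))$ is the classical characteristic map (strictly increasing in $x$ for $t\in\Omega_t$). Then for every $K\in\mathbb N$ there is a LRNR $H_r$ with rank $r=3$, degrees of freedom $K$, width $M\sim K$ and depth $L=2$, together with coefficient functions $\gamma(t),\theta(t)$ each of which is linear or constant in $t$, such that $h(t):=h(\gamma(t),\theta(t))\in H_r$ satisfies, for all $t\in\Omega_t$, $$\|u(\cdot,t)-h(t)\|_{L^1(\Omega_x)}\lesssim\frac1K|u_0|_{TV(\Omega_x)}\Big(1+T\|F''\|_{L^\infty(u_0(\Omega_x))}\|u_0'\|_{L^\infty(\Omega_x)}\Big),$$ with an implicit constant independent of $K$, $u_0$, $F$ and $T$.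
   Context: $\Omega_x=(0,1)$, $\Omega_t=(0,T)$, $F\in C^\infty(\mathbb{R})$ strictly convex; $\mathcal U$ is the set of functions of bounded variation on $\Omega_x$ with compact support in $\Omega_x$. $u$ solves $\partial_t u+\partial_x(F(u))=0$, $u(\cdot,0)=u_0$, $u(0,t)=u(1,t)=0$. LRNR (low rank neural representation): fix depth $L$ and widths $M_0=1,M_1,\dots,M_{L-1},M_L=1$, width $M=\max_\ell M_\ell$. A feedforward network is $h(x;W,B)=A^L\circ\sigma\odot A^{L-1}\circ\cdots\circ\sigma\odot A^1(x)$ with $A^\ell(z)=W^\ell z+B^\ell$, $W^\ell\in\mathbb{R}^{M_\ell\times M_{\ell-1}}$, $B^\ell\in\mathbb{R}^{M_\ell}$, and $\sigma(x)=\max\{0,x\}$ applied entrywise. A LRNR of rank $r$ is given by fixed $U_1^\ell,\dots,U_r^\ell$ (weight-shaped) and $V_1^\ell,\dots,V_r^\ell$ (bias-shaped) for each layer $\ell$, each a product $a\bullet b$ of two vectors with $\bullet\in\{\otimes,\otimes_d,{}_d\otimes\}$, where $\otimes$ is the Kronecker product, $a\otimes_d b:=a\otimes\mathrm{diag}(b)$, $a\,{}_d\!\otimes b:=\mathrm{diag}(a)\otimes b$; and coefficient sets $C^\ell,D^\ell\subset\mathbb{R}^r$. Its members are $h(\gamma,\theta):=h(\cdot;W,B)$ with $W^\ell=\sum_{i=1}^r\gamma_i^\ell U_i^\ell$, $B^\ell=\sum_{i=1}^r\theta_i^\ell V_i^\ell$. The degrees of freedom $K$ is the number of stored (unconstrained)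 real parameters defining the $U_i^\ell,V_i^\ell$. *)

theory Defs
  imports "HOL-Analysis.Analysis"
begin

type_synonym rmat = "nat \<times> nat \<times> (nat \<Rightarrow> nat \<Rightarrow> real)"

definition nrows :: "rmat \<Rightarrow> nat" where "nrows A = fst A"
definition ncols :: "rmat \<Rightarrow> nat" where "ncols A = fst (snd A)"
definition ent :: "rmat \<Rightarrow> nat \<Rightarrow> nat \<Rightarrow> real" where "ent A = snd (snd A)"

definition is_vecm :: "rmat \<Rightarrow> bool" where
  "is_vecm A \<longleftrightarrow> nrows A = 1 \<or> ncols A = 1"
definition vlen :: "rmat \<Rightarrow> nat" where "vlen A = nrows A * ncols A"
definition ventry :: "rmat \<Rightarrow> nat \<Rightarrow> real" where
  "ventry A k = (if ncols A = 1 then ent A k 0 else ent A 0 k)"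

definition diagm :: "rmat \<Rightarrow> rmat" where
  "diagm a = (vlen a, vlen a, \<lambda>i j. if i = j then ventry a i else 0)"

definition kron :: "rmat \<Rightarrow> rmat \<Rightarrow> rmat" where
  "kron A B = (nrows A * nrows B, ncols A * ncols B,
     \<lambda>i j. ent A (i div nrows B) (j div ncols B) * ent B (i mod nrows B) (j mod ncols B))"

datatype kprod = Kron | KronD | DKron

type_synonym factor = "kprod \<times> rmat \<times> rmat"

fun fmat :: "factor \<Rightarrow> rmat" where
  "fmat (Kron, a, b) = kron a b"
| "fmat (KronD, a, b) = kron a (diagm b)"
| "fmat (DKron, a, b) = kron (diagm a) b"

fun factor_ok :: "factor \<Rightarrow> bool" where
  "factor_ok (_, a, b) \<longleftrightarrow> is_vecm a \<and> is_vecm b"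

fun fdof :: "factor \<Rightarrow> nat" where
  "fdof (_, a, b) = vlen a + vlen b"

text \<open>widths ws = [M_0, ..., M_L]; W l is the weight matrix of layer l (entries W l j k,
  j < M_l, k < M_{l-1}), B l j the bias of layer l. zlayer .. l is the post-activation
  output of layer l (z_0 = input).\<close>
fun zlayer :: "nat list \<Rightarrow> (nat \<Rightarrow> nat \<Rightarrow> nat \<Rightarrow> real) \<Rightarrow> (nat \<Rightarrow> nat \<Rightarrow> real)
                 \<Rightarrow> real \<Rightarrow> nat \<Rightarrow> nat \<Rightarrow> real" where
  "zlayer ws W B x 0 = (\<lambda>j. x)"
| "zlayer ws W B x (Suc l) =
     (\<lambda>j. max 0 ((\<Sum>k<ws ! l. W (Suc l) j k * zlayer ws W B x l k) + B (Suc l) j))"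

definition ffnn :: "nat list \<Rightarrow> (nat \<Rightarrow> nat \<Rightarrow> nat \<Rightarrow> real) \<Rightarrow> (nat \<Rightarrow> nat \<Rightarrow> real)
                 \<Rightarrow> real \<Rightarrow> real" where
  "ffnn ws W B x =
     (let L = length ws - 1 in
      (\<Sum>k<ws ! (L - 1). W L 0 k * zlayer ws W B x (L - 1) k) + B L 0)"

text \<open>An LRNR of depth L, widths ws, rank r: factors U l i (weight-shaped), V l i
  (bias-shaped) for layers l \<in> {1..L}, i < r, and coefficient sets Cs l, Ds l \<subseteq> R^r
  (vectors in R^r represented as real lists of length r).\<close>
definition is_lrnr :: "nat \<Rightarrow> nat list \<Rightarrow> nat \<Rightarrow> (nat \<Rightarrow> nat \<Rightarrow> factor) \<Rightarrow> (nat \<Rightarrow> nat \<Rightarrow> factor)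
                       \<Rightarrow> (nat \<Rightarrow> real list set) \<Rightarrow> (nat \<Rightarrow> real list set) \<Rightarrow> bool" where
  "is_lrnr L ws r U V Cs Ds \<longleftrightarrow>
     L \<ge> 1 \<and> length ws = L + 1 \<and> ws ! 0 = 1 \<and> ws ! L = 1 \<and>
     (\<forall>l\<in>{1..L}.
        Cs l \<subseteq> {v. length v = r} \<and> Ds l \<subseteq> {v. length v = r} \<and>
        (\<forall>i<r. factor_ok (U l i) \<and> nrows (fmat (U l i)) = ws ! l \<and>
                ncols (fmat (U l i)) = ws ! (l - 1) \<and>
                factor_ok (V l i) \<and> nrows (fmat (V l i)) = ws ! l \<and>
                ncols (fmat (V l i)) = 1))"

definition lrnr_dof :: "nat \<Rightarrow> nat \<Rightarrow> (nat \<Rightarrow> nat \<Rightarrow> factor) \<Rightarrow> (nat \<Rightarrow> nat \<Rightarrow> factor) \<Rightarrow> nat" where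
  "lrnr_dof L r U V = (\<Sum>l\<in>{1..L}. \<Sum>i<r. fdof (U l i) + fdof (V l i))"

definition lrnr_width :: "nat list \<Rightarrow> nat" where
  "lrnr_width ws = Max (set ws)"

definition lrnr_h :: "nat list \<Rightarrow> nat \<Rightarrow> (nat \<Rightarrow> nat \<Rightarrow> factor) \<Rightarrow> (nat \<Rightarrow> nat \<Rightarrow> factor)
                      \<Rightarrow> (nat \<Rightarrow> real list) \<Rightarrow> (nat \<Rightarrow> real list) \<Rightarrow> real \<Rightarrow> real" where
  "lrnr_h ws r U V \<gamma> \<theta> x =
     ffnn ws (\<lambda>l j k. \<Sum>i<r. \<gamma> l ! i * ent (fmat (U l i)) j k)
             (\<lambda>l j. \<Sum>i<r. \<theta> l ! i * ent (fmat (V l i)) j 0) x"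

text \<open>Membership h(gamma, theta) \<in> H_r: coefficients lie in the coefficient sets.\<close>
definition lrnr_coeffs_ok :: "nat \<Rightarrow> (nat \<Rightarrow> real list set) \<Rightarrow> (nat \<Rightarrow> real list set)
                              \<Rightarrow> (nat \<Rightarrow> real list) \<Rightarrow> (nat \<Rightarrow> real list) \<Rightarrow> bool" where
  "lrnr_coeffs_ok L Cs Ds \<gamma> \<theta> \<longleftrightarrow> (\<forall>l\<in>{1..L}. \<gamma> l \<in> Cs l \<and> \<theta> l \<in> Ds l)"

definition smooth_fun :: "(real \<Rightarrow> real) \<Rightarrow> bool" where
  "smooth_fun F \<longleftrightarrow> (\<forall>n x. ((deriv ^^ n) F) differentiable (at x))"

definition strictly_convex :: "(real \<Rightarrow> real) \<Rightarrow> bool" where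
  "strictly_convex F \<longleftrightarrow>
     (\<forall>x y u. x \<noteq> y \<longrightarrow> 0 < u \<longrightarrow> u < 1 \<longrightarrow>
        F (u * x + (1 - u) * y) < u * F x + (1 - u) * F y)"

definition variation_sums :: "(real \<Rightarrow> real) \<Rightarrow> real set \<Rightarrow> real set" where
  "variation_sums u S =
     {\<Sum>i<length xs - 1. \<bar>u (xs ! Suc i) - u (xs ! i)\<bar> | xs. sorted xs \<and> set xs \<subseteq> S}"

definition bounded_variation_on :: "(real \<Rightarrow> real) \<Rightarrow> real set \<Rightarrow> bool" where
  "bounded_variation_on u S \<longleftrightarrow> bdd_above (variation_sums u S)"

definition total_variation :: "(real \<Rightarrow> real) \<Rightarrow> real set \<Rightarrow> real" where
  "total_variation u S = Sup (variation_sums u S)"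

definition compact_support_in :: "(real \<Rightarrow> real) \<Rightarrow> real set \<Rightarrow> bool" where
  "compact_support_in u S \<longleftrightarrow>
     compact (closure {x\<in>S. u x \<noteq> 0}) \<and> closure {x\<in>S. u x \<noteq> 0} \<subseteq> S"

text \<open>Extension of u_0 by zero outside Omega_x = (0,1).\<close>
definition u0ext :: "(real \<Rightarrow> real) \<Rightarrow> real \<Rightarrow> real" where
  "u0ext u0 y = (if 0 < y \<and> y < 1 then u0 y else 0)"

definition char_map :: "(real \<Rightarrow> real) \<Rightarrow> (real \<Rightarrow> real) \<Rightarrow> real \<Rightarrow> real \<Rightarrow> real" where
  "char_map F u0 y t = y + t * deriv F (u0ext u0 y)"

definition classical_solution :: "(real \<Rightarrow> real) \<Rightarrow> (real \<Rightarrow> real) \<Rightarrow> real \<Rightarrow> real \<Rightarrow> real" where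
  "classical_solution F u0 x t =
     (if \<exists>y. char_map F u0 y t = x then u0ext u0 (THE y. char_map F u0 y t = x) else 0)"

end

theory Submission
  imports Defs
begin

text \<open>Split the support [p, q] of u0 into N cells with nodes y_k. The classical solution is u0
  transported along the characteristics, so up to the oscillation of u0 on each cell it equals
  the staircase with value u0(y_k) on [X(y_k, t), X(y_(k+1), t)). The staircase is a sum of
  Heaviside steps located at X(y_(k+1), t) = y_(k+1) + t F'(u0(y_(k+1))), which is affine in t.
  Replacing each step by a ramp of slope N, the difference of two ReLUs, gives a network with
  2N hidden neurons whose biases are affine in t. Its L1 error is at most the sum over the cells
  of the oscillation times (cell length + 1/N). The oscillations add up to at most the total
  variation of u0, and by the mean value theorem each cell has length at most
  (1 + T sup|F''| sup|u0'|)/N.\<close>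

definition col_vec :: "nat \<Rightarrow> (nat \<Rightarrow> real) \<Rightarrow> rmat" where
  "col_vec n f = (n, 1, \<lambda>i j. f i)"

definition row_vec :: "nat \<Rightarrow> (nat \<Rightarrow> real) \<Rightarrow> rmat" where
  "row_vec n f = (1, n, \<lambda>i j. f j)"

definition unit_mat :: rmat where
  "unit_mat = (1, 1, \<lambda>i j. 1)"

lemma ent_kron_col_vec_unit [simp]: "ent (kron (col_vec n f) unit_mat) i j = f i"
  by (simp add: kron_def ent_def col_vec_def unit_mat_def nrows_def ncols_def)

lemma ent_kron_row_vec_unit [simp]: "ent (kron (row_vec n f) unit_mat) i j = f j"
  by (simp add: kron_def ent_def row_vec_def unit_mat_def nrows_def ncols_def)

text \<open>One hidden layer of width M with input weights w, output weights e and hidden biases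
  b0 + t b1, as a rank 3 LRNR: the three weight factors coincide and only the first is switched
  on; the bias factors are b0, b1, b1 with coefficients 1, t, 0.\<close>

definition shallow_U :: "nat \<Rightarrow> real \<Rightarrow> (nat \<Rightarrow> real) \<Rightarrow> nat \<Rightarrow> nat \<Rightarrow> factor" where
  "shallow_U M w e l i =
     (if l = 1 then (Kron, col_vec M (\<lambda>_. w), unit_mat) else (Kron, row_vec M e, unit_mat))"

definition shallow_V :: "nat \<Rightarrow> (nat \<Rightarrow> real) \<Rightarrow> (nat \<Rightarrow> real) \<Rightarrow> nat \<Rightarrow> nat \<Rightarrow> factor" where
  "shallow_V M b0 b1 l i =
     (if l = 1 then (Kron, col_vec M (if i = 0 then b0 else b1), unit_mat)
      else (Kron, col_vec 1 (\<lambda>_. 0), unit_mat))"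

definition shallow_gamma :: "real \<Rightarrow> nat \<Rightarrow> real list" where
  "shallow_gamma t l = [1, 0, 0]"

definition shallow_theta :: "real \<Rightarrow> nat \<Rightarrow> real list" where
  "shallow_theta t l = (if l = 1 then [1, t, 0] else [0, 0, 0])"

abbreviation shallow_coeffs :: "nat \<Rightarrow> real list set" where
  "shallow_coeffs l \<equiv> {v. length v = 3}"

lemma lrnr_h_shallow:
  "lrnr_h [1, M, 1] 3 (shallow_U M w e) (shallow_V M b0 b1) (shallow_gamma t) (shallow_theta t) x =
     (\<Sum>k<M. e k * max 0 (w * x + (t * b1 k + b0 k)))"
  by (simp add: lrnr_h_def ffnn_def numeral_3_eq_3 lessThan_Suc shallow_U_def shallow_V_def
      shallow_gamma_def shallow_theta_def)

lemma is_lrnr_shallow: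
  "M \<ge> 1 \<Longrightarrow> is_lrnr 2 [1, M, 1] 3 (shallow_U M w e) (shallow_V M b0 b1) shallow_coeffs shallow_coeffs"
  by (auto simp: is_lrnr_def shallow_U_def shallow_V_def kron_def col_vec_def row_vec_def unit_mat_def
      nrows_def ncols_def is_vecm_def)

lemma lrnr_dof_shallow: "lrnr_dof 2 3 (shallow_U M w e) (shallow_V M b0 b1) = 9 * M + 15"
  by (simp add: lrnr_dof_def numeral_3_eq_3 numeral_2_eq_2 lessThan_Suc atLeastAtMostSuc_conv
      shallow_U_def shallow_V_def col_vec_def row_vec_def unit_mat_def vlen_def nrows_def ncols_def)

lemma lrnr_coeffs_ok_shallow:
  "lrnr_coeffs_ok 2 shallow_coeffs shallow_coeffs (shallow_gamma t) (shallow_theta t)"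
  by (simp add: lrnr_coeffs_ok_def shallow_gamma_def shallow_theta_def)

lemma shallow_coeffs_affine:
  "\<forall>l\<in>{1..2}. \<forall>i<3. \<exists>a b. \<forall>t. shallow_gamma t l ! i = a + b * t"
  "\<forall>l\<in>{1..2}. \<forall>i<3. \<exists>a b. \<forall>t. shallow_theta t l ! i = a + b * t"
proof -
  have "shallow_gamma t l ! i = shallow_gamma 0 l ! i + (shallow_gamma 1 l ! i - shallow_gamma 0 l ! i) * t"
    "shallow_theta t l ! i = shallow_theta 0 l ! i + (shallow_theta 1 l ! i - shallow_theta 0 l ! i) * t"
    if "i < 3" for t l i
    using that by (auto simp: shallow_gamma_def shallow_theta_def less_Suc_eq numeral_3_eq_3)
  then show "\<forall>l\<in>{1..2}. \<forall>i<3. \<exists>a b. \<forall>t. shallow_gamma t l ! i = a + b * t"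
    "\<forall>l\<in>{1..2}. \<forall>i<3. \<exists>a b. \<forall>t. shallow_theta t l ! i = a + b * t"
    by blast+
qed

definition ramp :: "real \<Rightarrow> real \<Rightarrow> real \<Rightarrow> real" where
  "ramp w z x = max 0 (w * (x - z)) - max 0 (w * (x - z) - 1)"

text \<open>Each ramp is the difference of two hidden neurons, so 2N neurons realise N ramps of slope
  w whose breakpoints z0 k + t z1 k move affinely with t.\<close>

definition ramp_sum_U :: "nat \<Rightarrow> real \<Rightarrow> (nat \<Rightarrow> real) \<Rightarrow> nat \<Rightarrow> nat \<Rightarrow> factor" where
  "ramp_sum_U N w a = shallow_U (2 * N) w (\<lambda>j. (if even j then 1 else -1) * a (j div 2))"

definition ramp_sum_V ::
    "nat \<Rightarrow> real \<Rightarrow> (nat \<Rightarrow> real) \<Rightarrow> (nat \<Rightarrow> real) \<Rightarrow> nat \<Rightarrow> nat \<Rightarrow> factor" where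
  "ramp_sum_V N w z0 z1 = shallow_V (2 * N)
     (\<lambda>j. - (w * z0 (j div 2)) - (if even j then 0 else 1)) (\<lambda>j. - (w * z1 (j div 2)))"

lemma is_lrnr_ramp_sum:
  "N \<ge> 1 \<Longrightarrow> is_lrnr 2 [1, 2 * N, 1] 3 (ramp_sum_U N w a) (ramp_sum_V N w z0 z1)
     shallow_coeffs shallow_coeffs"
  unfolding ramp_sum_U_def ramp_sum_V_def by (rule is_lrnr_shallow) simp

lemma lrnr_dof_ramp_sum: "lrnr_dof 2 3 (ramp_sum_U N w a) (ramp_sum_V N w z0 z1) = 18 * N + 15"
  by (simp add: ramp_sum_U_def ramp_sum_V_def lrnr_dof_shallow)

lemma sum_lessThan_double:
  fixes f :: "nat \<Rightarrow> 'a::comm_monoid_add"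
  shows "(\<Sum>j<2 * N. f j) = (\<Sum>k<N. f (2 * k) + f (2 * k + 1))"
  by (induction N) (simp_all add: numeral_2_eq_2 add.assoc)

lemma lrnr_h_ramp_sum:
  "lrnr_h [1, 2 * N, 1] 3 (ramp_sum_U N w a) (ramp_sum_V N w z0 z1) (shallow_gamma t) (shallow_theta t) x =
     (\<Sum>k<N. a k * ramp w (z0 k + t * z1 k) x)"
proof -
  have "(2 * k) div 2 = k" "(2 * k + 1) div 2 = k" for k :: nat
    by presburger+
  then show ?thesis
    unfolding ramp_sum_U_def ramp_sum_V_def lrnr_h_shallow sum_lessThan_double ramp_def
    by (intro sum.cong) (simp_all add: algebra_simps)
qed

lemma abs_step_sub_ramp_le:
  assumes "w > 0"
  shows "\<bar>(if z \<le> x then 1 else 0) - ramp w z x\<bar> \<le> indicator {z..<z + 1/w} x"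
proof -
  have "w * (x - z) < 0 \<longleftrightarrow> x < z" "w * (x - z) < 1 \<longleftrightarrow> x < z + 1/w"
    using assms by (auto simp: field_simps mult_less_0_iff)
  then show ?thesis
    by (auto simp: ramp_def indicator_def)
qed

lemma ex_cell_containing:
  fixes z :: "nat \<Rightarrow> real"
  assumes "z 0 \<le> x" "x < z N"
  shows "\<exists>k<N. z k \<le> x \<and> x < z (Suc k)"
  using assms(2)
proof (induction N)
  case (Suc N)
  then show ?case
    by (cases "x < z N") (auto intro: less_SucI)
qed (use assms(1) in simp)

text \<open>The sum of steps is the staircase equal to v k on [z k, z (k+1)).\<close>

lemma abs_sub_staircase_le:
  fixes z v osc :: "nat \<Rightarrow> real" and u :: "real \<Rightarrow> real"
  assumes z: "strict_mono z"
    and osc_nonneg: "\<And>k. osc k \<ge> 0"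
    and u_left: "\<And>x. x < z 0 \<Longrightarrow> u x = 0" and u_right: "\<And>x. x \<ge> z N \<Longrightarrow> u x = 0"
    and v0: "v 0 = 0" and vN: "v N = 0"
    and u_cell: "\<And>k x. k < N \<Longrightarrow> z k \<le> x \<Longrightarrow> x < z (Suc k) \<Longrightarrow> \<bar>u x - v k\<bar> \<le> osc k"
  shows "\<bar>u x - (\<Sum>k<N. (v (Suc k) - v k) * (if z (Suc k) \<le> x then 1 else 0))\<bar>
     \<le> (\<Sum>k<N. osc k * indicator {z k..<z (Suc k)} x)"
    (is "\<bar>u x - ?step\<bar> \<le> ?cells")
proof -
  have cells_nonneg: "?cells \<ge> 0"
    using osc_nonneg by (intro sum_nonneg) auto
  consider "x < z 0" | "z N \<le> x" | k where "k < N" "z k \<le> x" "x < z (Suc k)"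
    using ex_cell_containing[of z x N] by force
  then show ?thesis
  proof cases
    case 1
    then have "\<not> z (Suc k) \<le> x" for k
      using z by (smt (verit) strict_mono_less zero_less_Suc)
    then show ?thesis using 1 u_left cells_nonneg by simp
  next
    case 2
    then have "z (Suc k) \<le> x" if "k < N" for k
      using z that by (smt (verit) Suc_leI strict_mono_less_eq)
    then have "?step = (\<Sum>k<N. v (Suc k) - v k)" by simp
    then show ?thesis using 2 u_right cells_nonneg v0 vN by (simp add: sum_lessThan_telescope)
  next
    case (3 k)
    have "z (Suc j) \<le> x \<longleftrightarrow> j < k" for j
      using 3 z by (smt (verit) Suc_leI not_less_eq strict_mono_less strict_mono_less_eq)
    then have "?step = (\<Sum>j<N. if j < k then v (Suc j) - v j else 0)"
      by (simp add: if_distrib cong: if_cong)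
    also have "\<dots> = (\<Sum>j\<in>{..<N} \<inter> {j. j < k}. v (Suc j) - v j)"
      by (simp add: sum.inter_restrict)
    also have "{..<N} \<inter> {j. j < k} = {..<k}"
      using 3 by auto
    also have "(\<Sum>j<k. v (Suc j) - v j) = v k" using v0 by (simp add: sum_lessThan_telescope)
    finally have "?step = v k" .
    moreover have "osc k \<le> ?cells"
      using 3 osc_nonneg member_le_sum[of k "{..<N}" "\<lambda>k. osc k * indicator {z k..<z (Suc k)} x"]
      by simp
    ultimately show ?thesis using u_cell[OF 3] by simp
  qed
qed

lemma abs_sub_ramp_sum_le:
  fixes z v osc :: "nat \<Rightarrow> real" and u :: "real \<Rightarrow> real"
  assumes z: "strict_mono z" and w: "w > 0"
    and osc_nonneg: "\<And>k. osc k \<ge> 0"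
    and u_left: "\<And>x. x < z 0 \<Longrightarrow> u x = 0" and u_right: "\<And>x. x \<ge> z N \<Longrightarrow> u x = 0"
    and v0: "v 0 = 0" and vN: "v N = 0"
    and u_cell: "\<And>k x. k < N \<Longrightarrow> z k \<le> x \<Longrightarrow> x < z (Suc k) \<Longrightarrow> \<bar>u x - v k\<bar> \<le> osc k"
    and v_jump: "\<And>k. k < N \<Longrightarrow> \<bar>v (Suc k) - v k\<bar> \<le> osc k"
  shows "\<bar>u x - (\<Sum>k<N. (v (Suc k) - v k) * ramp w (z (Suc k)) x)\<bar>
     \<le> (\<Sum>k<N. osc k * indicator {z k..<z (Suc k)} x)
       + (\<Sum>k<N. osc k * indicator {z (Suc k)..<z (Suc k) + 1/w} x)"
proof -
  let ?step = "\<Sum>k<N. (v (Suc k) - v k) * (if z (Suc k) \<le> x then 1 else 0)"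
  have "\<bar>?step - (\<Sum>k<N. (v (Suc k) - v k) * ramp w (z (Suc k)) x)\<bar>
      \<le> (\<Sum>k<N. \<bar>v (Suc k) - v k\<bar> * \<bar>(if z (Suc k) \<le> x then 1 else 0) - ramp w (z (Suc k)) x\<bar>)"
    unfolding sum_subtractf[symmetric] right_diff_distrib[symmetric] abs_mult[symmetric]
    by (rule sum_abs)
  also have "\<dots> \<le> (\<Sum>k<N. osc k * indicator {z (Suc k)..<z (Suc k) + 1/w} x)"
    using v_jump abs_step_sub_ramp_le[OF w] osc_nonneg by (intro sum_mono mult_mono) auto
  finally have "\<bar>?step - (\<Sum>k<N. (v (Suc k) - v k) * ramp w (z (Suc k)) x)\<bar>
      \<le> (\<Sum>k<N. osc k * indicator {z (Suc k)..<z (Suc k) + 1/w} x)" .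
  moreover have "\<bar>u x - ?step\<bar> \<le> (\<Sum>k<N. osc k * indicator {z k..<z (Suc k)} x)"
    by (rule abs_sub_staircase_le) (use assms in auto)
  ultimately show ?thesis by linarith
qed

lemma integrable_indicator_atLeastLessThan:
  "integrable lborel (\<lambda>x. c * indicator {a..<b::real} x :: real)"
  by (cases "a \<le> b") auto

lemma set_integrable_abs_le:
  fixes f g :: "real \<Rightarrow> real"
  assumes "integrable lborel g" "A \<in> sets lborel" "f \<in> borel_measurable borel"
    and "\<And>x. \<bar>f x\<bar> \<le> g x"
  shows "set_integrable lborel A f" "(LINT x:A|lborel. \<bar>f x\<bar>) \<le> integral\<^sup>L lborel g"
proof -
  have g_nonneg: "g x \<ge> 0" for x using assms(4)[of x] by linarith
  show f: "set_integrable lborel A f"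
    unfolding set_integrable_def
    by (rule Bochner_Integration.integrable_bound[OF assms(1)])
       (use assms g_nonneg in \<open>auto simp: indicator_def\<close>)
  show "(LINT x:A|lborel. \<bar>f x\<bar>) \<le> integral\<^sup>L lborel g"
    unfolding set_lebesgue_integral_def
    using set_integrable_abs[OF f] assms(1,4) g_nonneg
    by (intro integral_mono) (auto simp: set_integrable_def indicator_def)
qed

lemma ramp_sum_L1_error:
  fixes z v osc :: "nat \<Rightarrow> real" and u :: "real \<Rightarrow> real"
  assumes z: "strict_mono z" and w: "w > 0"
    and osc_nonneg: "\<And>k. osc k \<ge> 0"
    and u_left: "\<And>x. x < z 0 \<Longrightarrow> u x = 0" and u_right: "\<And>x. x \<ge> z N \<Longrightarrow> u x = 0"
    and v0: "v 0 = 0" and vN: "v N = 0"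
    and u_cell: "\<And>k x. k < N \<Longrightarrow> z k \<le> x \<Longrightarrow> x < z (Suc k) \<Longrightarrow> \<bar>u x - v k\<bar> \<le> osc k"
    and v_jump: "\<And>k. k < N \<Longrightarrow> \<bar>v (Suc k) - v k\<bar> \<le> osc k"
    and u: "u \<in> borel_measurable borel" and A: "A \<in> sets lborel"
  defines "h \<equiv> \<lambda>x. (\<Sum>k<N. (v (Suc k) - v k) * ramp w (z (Suc k)) x)"
  shows "set_integrable lborel A (\<lambda>x. u x - h x)"
    "(LINT x:A|lborel. \<bar>u x - h x\<bar>) \<le> (\<Sum>k<N. osc k * (z (Suc k) - z k)) + (\<Sum>k<N. osc k) / w"
proof -
  define g where "g x = (\<Sum>k<N. osc k * indicator {z k..<z (Suc k)} x)
       + (\<Sum>k<N. osc k * indicator {z (Suc k)..<z (Suc k) + 1/w} x)" for x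
  have cells: "integrable lborel (\<lambda>x. \<Sum>k<N. osc k * indicator {a k..<b k} x)" for a b :: "nat \<Rightarrow> real"
    by (intro Bochner_Integration.integrable_sum integrable_indicator_atLeastLessThan)
  have g: "integrable lborel g"
    unfolding g_def by (intro Bochner_Integration.integrable_add cells)
  have cells_integral: "integral\<^sup>L lborel (\<lambda>x. \<Sum>k<N. osc k * indicator {a k..<b k} x)
      = (\<Sum>k<N. osc k * (b k - a k))" if "\<And>k. a k \<le> b k" for a b :: "nat \<Rightarrow> real"
    using that by (subst Bochner_Integration.integral_sum)
      (auto intro: integrable_indicator_atLeastLessThan)
  have "z k \<le> z (Suc k)" for k using z by (simp add: strict_mono_less_eq)
  then have "integral\<^sup>L lborel g = (\<Sum>k<N. osc k * (z (Suc k) - z k))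
      + (\<Sum>k<N. osc k * (z (Suc k) + 1/w - z (Suc k)))"
    unfolding g_def Bochner_Integration.integral_add[OF cells cells]
    using w by (intro arg_cong2[where f = "(+)"] cells_integral) auto
  also have "\<dots> = (\<Sum>k<N. osc k * (z (Suc k) - z k)) + (\<Sum>k<N. osc k / w)"
    by simp
  moreover have "h \<in> borel_measurable borel"
    unfolding h_def ramp_def by measurable
  moreover have "\<bar>u x - h x\<bar> \<le> g x" for x
    unfolding h_def g_def by (rule abs_sub_ramp_sum_le) (use assms in auto)
  ultimately show "set_integrable lborel A (\<lambda>x. u x - h x)"
    "(LINT x:A|lborel. \<bar>u x - h x\<bar>) \<le> (\<Sum>k<N. osc k * (z (Suc k) - z k)) + (\<Sum>k<N. osc k) / w"
    using set_integrable_abs_le[OF g A, of "\<lambda>x. u x - h x"] u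
    by (simp_all add: sum_divide_distrib borel_measurable_diff)
qed

lemma compact_support_in_unit_interval:
  assumes "compact_support_in u0 {0<..<1}"
  obtains p q where "0 < p" "p < q" "q < (1::real)" "\<And>y. y \<le> p \<or> q \<le> y \<Longrightarrow> u0ext u0 y = 0"
proof -
  define S where "S = closure {x\<in>{0<..<1::real}. u0 x \<noteq> 0}"
  have S: "compact S" "S \<subseteq> {0<..<1}"
    using assms unfolding compact_support_in_def S_def by auto
  have in_S: "y \<in> S" if "u0ext u0 y \<noteq> 0" for y
    using that closure_subset[of "{x\<in>{0<..<1}. u0 x \<noteq> 0}"]
    unfolding S_def u0ext_def by (auto split: if_splits)
  show thesis
  proof (cases "S = {}")
    case True
    then show thesis
      using in_S by (intro that[of "1/4" "3/4"]) auto
  next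
    case False
    obtain a where a: "a \<in> S" "\<forall>y\<in>S. a \<le> y" using compact_attains_inf[OF S(1) False] by blast
    obtain b where b: "b \<in> S" "\<forall>y\<in>S. y \<le> b" using compact_attains_sup[OF S(1) False] by blast
    have "0 < a" "a \<le> b" "b < 1" using a b S(2) by force+
    then show thesis
      using in_S a(2) b(2) by (intro that[of "a/2" "(b+1)/2"]) force+
  qed
qed

lemma strict_mono_translation_outside:
  fixes f :: "real \<Rightarrow> real"
  assumes mono: "strict_mono_on {p..q} f" and "p < q"
    and outside: "\<And>y. y \<le> p \<or> q \<le> y \<Longrightarrow> f y = y + c"
  shows "strict_mono f"
proof (rule strict_monoI)
  fix y1 y2 :: real
  assume "y1 < y2"
  show "f y1 < f y2"
  proof (cases "y2 \<le> p \<or> q \<le> y1")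
    case True
    then show ?thesis using outside[of y1] outside[of y2] \<open>y1 < y2\<close> by force
  next
    case False
    have "f y1 \<le> f (max p y1)" "f (min q y2) \<le> f y2"
      using outside[of y1] outside[of p] outside[of y2] outside[of q] False by (auto simp: max_def min_def)
    moreover have "f (max p y1) < f (min q y2)"
      using False \<open>y1 < y2\<close> \<open>p < q\<close> by (intro strict_mono_onD[OF mono]) auto
    ultimately show ?thesis by linarith
  qed
qed

locale characteristics_data =
  fixes F u0 :: "real \<Rightarrow> real" and p q T :: real
  assumes smooth: "smooth_fun F" and C1: "u0 C1_differentiable_on {0<..<1}"
    and bv: "bounded_variation_on u0 {0<..<1}"
    and support: "0 < p" "p < q" "q < 1"
    and outside: "\<And>y. y \<le> p \<or> q \<le> y \<Longrightarrow> u0ext u0 y = 0"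
    and T: "T > 0"
    and char_mono: "\<And>t. t \<in> {0<..<T} \<Longrightarrow> strict_mono_on {0<..<1} (\<lambda>y. char_map F u0 y t)"
begin

abbreviation "sup_ddF \<equiv> (SUP v\<in>u0 ` {0<..<1}. \<bar>deriv (deriv F) v\<bar>)"
abbreviation "sup_du0 \<equiv> (SUP x\<in>{0<..<1}. \<bar>deriv u0 x\<bar>)"
abbreviation "TV \<equiv> total_variation u0 {0<..<1}"

lemma support_subset: "{p..q} \<subseteq> {0<..<1}"
  using support by auto

lemma u0_has_derivative: "x \<in> {0<..<1} \<Longrightarrow> (u0 has_real_derivative deriv u0 x) (at x)"
  using C1 by (auto simp: C1_differentiable_on_eq DERIV_deriv_iff_real_differentiable)

lemma isCont_u0: "x \<in> {0<..<1} \<Longrightarrow> isCont u0 x"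
  using u0_has_derivative DERIV_isCont by blast

lemma u0ext_eq: "y \<in> {p..q} \<Longrightarrow> u0ext u0 y = u0 y"
  using support by (auto simp: u0ext_def)

lemma u0_eq_0: "y \<in> {0<..<1} \<Longrightarrow> y \<notin> {p..q} \<Longrightarrow> u0 y = 0"
  using outside[of y] by (auto simp: u0ext_def)

lemma isCont_u0ext: "isCont (u0ext u0) x"
proof -
  consider "x \<in> {0<..<1}" | "x \<in> {..<p}" | "x \<in> {q<..}"
    using support by force
  then show ?thesis
  proof cases
    case 1
    then have "\<forall>\<^sub>F y in nhds x. u0ext u0 y = u0 y"
      by (intro eventually_nhds_in_open[of "{0<..<1}", THEN eventually_mono])
        (auto simp: u0ext_def)
    then show ?thesis using isCont_cong isCont_u0[OF 1] by blast
  next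
    case 2
    then have "\<forall>\<^sub>F y in nhds x. u0ext u0 y = 0"
      by (intro eventually_nhds_in_open[of "{..<p}", THEN eventually_mono]) (auto intro: outside)
    then show ?thesis using isCont_cong by force
  next
    case 3
    then have "\<forall>\<^sub>F y in nhds x. u0ext u0 y = 0"
      by (intro eventually_nhds_in_open[of "{q<..}", THEN eventually_mono]) (auto intro: outside)
    then show ?thesis using isCont_cong by force
  qed
qed

lemma deriv_F_has_derivative: "(deriv F has_real_derivative deriv (deriv F) x) (at x)"
  using smooth unfolding smooth_fun_def
  by (metis DERIV_deriv_iff_real_differentiable funpow.simps o_id)

lemma isCont_deriv2_F: "isCont (deriv (deriv F)) x"
  using smooth unfolding smooth_fun_def
  by (metis differentiable_imp_continuous_within funpow_0 funpow_Suc_right o_apply)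

lemma deriv_u0_eq_0: "x \<in> {0<..<1} \<Longrightarrow> x \<notin> {p..q} \<Longrightarrow> deriv u0 x = 0"
proof -
  assume x: "x \<in> {0<..<1}" "x \<notin> {p..q}"
  then consider "x \<in> {0<..<p}" | "x \<in> {q<..<1}" by force
  then have "(u0 has_real_derivative 0) (at x)"
  proof cases
    case 1
    show ?thesis
      by (rule has_field_derivative_transform_within_open[of "\<lambda>_. 0" 0 x "{0<..<p}"])
        (use 1 support u0_eq_0 in auto)
  next
    case 2
    show ?thesis
      by (rule has_field_derivative_transform_within_open[of "\<lambda>_. 0" 0 x "{q<..<1}"])
        (use 2 support u0_eq_0 in auto)
  qed
  then show ?thesis using DERIV_unique u0_has_derivative[OF x(1)] by blast
qed

lemma bdd_above_abs_deriv_u0: "bdd_above ((\<lambda>x. \<bar>deriv u0 x\<bar>) ` {0<..<1})"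
proof -
  have "continuous_on {0<..<1} (\<lambda>x. vector_derivative u0 (at x))"
    using C1 by (simp add: C1_differentiable_on_eq)
  moreover have "vector_derivative u0 (at x) = deriv u0 x" if "x \<in> {0<..<1}" for x
    using u0_has_derivative[OF that]
    by (simp add: has_real_derivative_iff_has_vector_derivative vector_derivative_at)
  ultimately have "continuous_on {0<..<1} (deriv u0)"
    by (rule continuous_on_eq)
  then have "continuous_on {p..q} (\<lambda>x. \<bar>deriv u0 x\<bar>)"
    by (intro continuous_intros continuous_on_subset[OF _ support_subset])
  then have "bounded ((\<lambda>x. \<bar>deriv u0 x\<bar>) ` {p..q})"
    by (intro compact_imp_bounded compact_continuous_image) auto
  then have "bdd_above (insert 0 ((\<lambda>x. \<bar>deriv u0 x\<bar>) ` {p..q}))"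
    by (simp add: bounded_imp_bdd_above)
  moreover have "(\<lambda>x. \<bar>deriv u0 x\<bar>) ` {0<..<1} \<subseteq> insert 0 ((\<lambda>x. \<bar>deriv u0 x\<bar>) ` {p..q})"
    using deriv_u0_eq_0 by fastforce
  ultimately show ?thesis by (rule bdd_above_mono)
qed

lemma u0_image_subset: "u0 ` {0<..<1} \<subseteq> u0 ` {p..q}"
proof -
  have "u0 p = 0" using outside[of p] u0ext_eq[of p] support by simp
  then show ?thesis using u0_eq_0 support by (force simp: image_iff)
qed

lemma bdd_above_abs_deriv2_F: "bdd_above ((\<lambda>v. \<bar>deriv (deriv F) v\<bar>) ` u0 ` {0<..<1})"
proof -
  have "continuous_on {p..q} u0"
    using isCont_u0 support_subset by (intro continuous_at_imp_continuous_on) auto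
  then have "compact (u0 ` {p..q})" by (intro compact_continuous_image) auto
  moreover have "continuous_on (u0 ` {p..q}) (\<lambda>v. \<bar>deriv (deriv F) v\<bar>)"
    by (simp add: continuous_at_imp_continuous_on isCont_deriv2_F)
  ultimately have "bdd_above ((\<lambda>v. \<bar>deriv (deriv F) v\<bar>) ` u0 ` {p..q})"
    by (metis bounded_imp_bdd_above compact_imp_bounded compact_continuous_image)
  then show ?thesis by (rule bdd_above_mono) (intro image_mono u0_image_subset)
qed

lemma abs_deriv2_F_le_sup: "v \<in> u0 ` {0<..<1} \<Longrightarrow> \<bar>deriv (deriv F) v\<bar> \<le> sup_ddF"
  by (rule cSUP_upper[OF _ bdd_above_abs_deriv2_F])

lemma abs_deriv_u0_le_sup: "x \<in> {0<..<1} \<Longrightarrow> \<bar>deriv u0 x\<bar> \<le> sup_du0"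
  by (rule cSUP_upper[OF _ bdd_above_abs_deriv_u0])

lemma sup_ddF_nonneg: "sup_ddF \<ge> 0"
  using abs_deriv2_F_le_sup[of "u0 p"] support by force

lemma sup_du0_nonneg: "sup_du0 \<ge> 0"
  using abs_deriv_u0_le_sup[of p] support by force

lemma variation_sum_le_TV:
  "sorted xs \<Longrightarrow> set xs \<subseteq> {0<..<1} \<Longrightarrow>
   (\<Sum>i<length xs - 1. \<bar>u0 (xs ! Suc i) - u0 (xs ! i)\<bar>) \<le> TV"
  unfolding total_variation_def
  by (rule cSup_upper) (use bv in \<open>auto simp: bounded_variation_on_def variation_sums_def\<close>)

lemma TV_nonneg: "TV \<ge> 0"
  using variation_sum_le_TV[of "[]"] by simp

lemma abs_u0_diff_le:
  assumes "p \<le> a" "a \<le> b" "b \<le> q"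
  shows "\<bar>u0 b - u0 a\<bar> \<le> sup_du0 * (b - a)"
proof (cases "a = b")
  case False
  then have "a < b" using assms by simp
  then obtain c where c: "a < c" "c < b" "u0 b - u0 a = (b - a) * deriv u0 c"
    using MVT2[of a b u0 "deriv u0"] u0_has_derivative assms support by force
  then have "\<bar>deriv u0 c\<bar> \<le> sup_du0"
    using assms support by (intro abs_deriv_u0_le_sup) auto
  then show ?thesis using c \<open>a < b\<close> by (simp add: abs_mult mult.commute mult_left_mono)
qed simp

text \<open>F' is Lipschitz on the range of u0 because that range is an interval, so the mean value
  point stays in it.\<close>

lemma abs_deriv_F_u0_diff_le:
  assumes a: "a \<in> {p..q}" and b: "b \<in> {p..q}"
  shows "\<bar>deriv F (u0 b) - deriv F (u0 a)\<bar> \<le> sup_ddF * \<bar>u0 b - u0 a\<bar>"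
proof -
  have conn: "connected (u0 ` {p..q})"
    using isCont_u0 support_subset
    by (intro connected_continuous_image continuous_at_imp_continuous_on) auto
  have ordered: "\<bar>deriv F hi - deriv F lo\<bar> \<le> sup_ddF * (hi - lo)"
    if lh: "lo \<in> u0 ` {p..q}" "hi \<in> u0 ` {p..q}" "lo \<le> hi" for lo hi
  proof (cases "lo = hi")
    case False
    then have "lo < hi" using lh by simp
    then obtain c where c: "lo < c" "c < hi" "deriv F hi - deriv F lo = (hi - lo) * deriv (deriv F) c"
      using MVT2[of lo hi "deriv F" "deriv (deriv F)"] deriv_F_has_derivative by blast
    then have "c \<in> u0 ` {0<..<1}"
      using connectedD_interval[OF conn lh(1,2)] image_mono[OF support_subset] by force
    then have "\<bar>deriv (deriv F) c\<bar> \<le> sup_ddF" by (rule abs_deriv2_F_le_sup)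
    then show ?thesis using c \<open>lo < hi\<close> by (simp add: abs_mult mult.commute mult_left_mono)
  qed simp
  show ?thesis
    using ordered[of "u0 a" "u0 b"] ordered[of "u0 b" "u0 a"] a b
    by (cases "u0 a \<le> u0 b") (auto simp: abs_minus_commute)
qed

lemma char_map_outside: "y \<le> p \<or> q \<le> y \<Longrightarrow> char_map F u0 y t = y + t * deriv F 0"
  by (simp add: char_map_def outside)

lemma strict_mono_char_map: "t \<in> {0<..<T} \<Longrightarrow> strict_mono (\<lambda>y. char_map F u0 y t)"
  by (rule strict_mono_translation_outside[OF monotone_on_subset[OF char_mono support_subset]
        support(2) char_map_outside])

lemma char_map_surj: "\<exists>y. char_map F u0 y t = x"
proof -
  define a where "a = min 0 (x - t * deriv F 0)"
  define b where "b = max 1 (x - t * deriv F 0)"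
  have "isCont (\<lambda>y. char_map F u0 y t) y" for y
    unfolding char_map_def
    using continuous_at_compose[OF isCont_u0ext DERIV_isCont[OF deriv_F_has_derivative]]
    by (intro continuous_intros) (simp add: o_def)
  moreover have "char_map F u0 a t \<le> x" "x \<le> char_map F u0 b t" "a \<le> b"
    using char_map_outside support by (auto simp: a_def b_def)
  ultimately show ?thesis
    using IVT'[of "\<lambda>y. char_map F u0 y t" a x b] by (auto intro: continuous_at_imp_continuous_on)
qed

definition char_inv :: "real \<Rightarrow> real \<Rightarrow> real" where
  "char_inv t x = (THE y. char_map F u0 y t = x)"

lemma char_map_char_inv:
  assumes "t \<in> {0<..<T}"
  shows "char_map F u0 (char_inv t x) t = x" "classical_solution F u0 x t = u0ext u0 (char_inv t x)"
proof -
  obtain y where y: "char_map F u0 y t = x"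
    using char_map_surj by blast
  have "y' = y" if "char_map F u0 y' t = x" for y'
    using that y strict_mono_eq[OF strict_mono_char_map[OF assms], of y' y] by simp
  with y have unique: "\<exists>!y. char_map F u0 y t = x" by blast
  show "char_map F u0 (char_inv t x) t = x"
    unfolding char_inv_def by (rule theI'[OF unique])
  show "classical_solution F u0 x t = u0ext u0 (char_inv t x)"
    unfolding classical_solution_def char_inv_def using unique by auto
qed

lemma char_inv_less_iff:
  assumes "t \<in> {0<..<T}"
  shows "char_inv t x < y \<longleftrightarrow> x < char_map F u0 y t"
  using strict_mono_less[OF strict_mono_char_map[OF assms], of "char_inv t x" y]
  by (simp add: char_map_char_inv(1)[OF assms])

lemma classical_solution_measurable:
  assumes "t \<in> {0<..<T}"
  shows "(\<lambda>x. classical_solution F u0 x t) \<in> borel_measurable borel"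
proof -
  have "mono (char_inv t)"
  proof
    fix x1 x2 :: real
    assume "x1 \<le> x2"
    then show "char_inv t x1 \<le> char_inv t x2"
      using char_inv_less_iff[OF assms, of x2 "char_inv t x1"] char_map_char_inv(1)[OF assms, of x1]
      by linarith
  qed
  then have "char_inv t \<in> borel_measurable borel" by (rule borel_measurable_mono)
  moreover have "u0ext u0 \<in> borel_measurable borel"
    by (intro borel_measurable_continuous_onI continuous_at_imp_continuous_on) (simp add: isCont_u0ext)
  ultimately show ?thesis
    by (simp add: char_map_char_inv(2)[OF assms] measurable_compose[of "char_inv t"])
qed

definition mesh :: "nat \<Rightarrow> real" where
  "mesh N = (q - p) / real N"

definition node :: "nat \<Rightarrow> nat \<Rightarrow> real" where
  "node N k = p + real k * mesh N"

definition node_val :: "nat \<Rightarrow> nat \<Rightarrow> real" where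
  "node_val N k = u0ext u0 (node N k)"

definition osc_point :: "nat \<Rightarrow> nat \<Rightarrow> real" where
  "osc_point N k = (SOME x. x \<in> {node N k..node N (Suc k)} \<and>
      (\<forall>y\<in>{node N k..node N (Suc k)}. \<bar>u0ext u0 y - node_val N k\<bar> \<le> \<bar>u0ext u0 x - node_val N k\<bar>))"

definition osc :: "nat \<Rightarrow> nat \<Rightarrow> real" where
  "osc N k = \<bar>u0ext u0 (osc_point N k) - node_val N k\<bar>"

lemma mesh_pos: "N \<ge> 1 \<Longrightarrow> mesh N > 0"
  using support by (simp add: mesh_def)

lemma mesh_le: "N \<ge> 1 \<Longrightarrow> mesh N \<le> 1 / real N"
  using support unfolding mesh_def by (intro divide_right_mono) auto

lemma strict_mono_node: "N \<ge> 1 \<Longrightarrow> strict_mono (node N)"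
  using mesh_pos by (intro strict_monoI) (simp add: node_def)

lemma node_0 [simp]: "node N 0 = p"
  by (simp add: node_def)

lemma node_N: "N \<ge> 1 \<Longrightarrow> node N N = q"
  by (simp add: node_def mesh_def)

lemma node_Suc: "node N (Suc k) = node N k + mesh N"
  by (simp add: node_def algebra_simps)

lemma node_in_support:
  assumes "N \<ge> 1" "k \<le> N"
  shows "node N k \<in> {p..q}"
  using strict_mono_less_eq[OF strict_mono_node[OF assms(1)], of 0 k]
    strict_mono_less_eq[OF strict_mono_node[OF assms(1)], of k N] node_N assms
  by simp

lemma osc_point_maximises:
  assumes "N \<ge> 1"
  shows "osc_point N k \<in> {node N k..node N (Suc k)}"
    "\<And>y. y \<in> {node N k..node N (Suc k)} \<Longrightarrow> \<bar>u0ext u0 y - node_val N k\<bar> \<le> osc N k"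
proof -
  have "continuous_on {node N k..node N (Suc k)} (\<lambda>y. \<bar>u0ext u0 y - node_val N k\<bar>)"
    using isCont_u0ext by (intro continuous_at_imp_continuous_on continuous_intros) auto
  moreover have "node N k \<le> node N (Suc k)"
    using mesh_pos[OF assms] by (simp add: node_Suc)
  ultimately have "\<exists>x\<in>{node N k..node N (Suc k)}. \<forall>y\<in>{node N k..node N (Suc k)}.
      \<bar>u0ext u0 y - node_val N k\<bar> \<le> \<bar>u0ext u0 x - node_val N k\<bar>"
    by (intro continuous_attains_sup) auto
  then have "osc_point N k \<in> {node N k..node N (Suc k)} \<and> (\<forall>y\<in>{node N k..node N (Suc k)}.
      \<bar>u0ext u0 y - node_val N k\<bar> \<le> \<bar>u0ext u0 (osc_point N k) - node_val N k\<bar>)"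
    unfolding osc_point_def Bex_def by (rule someI_ex)
  then show "osc_point N k \<in> {node N k..node N (Suc k)}"
    "\<And>y. y \<in> {node N k..node N (Suc k)} \<Longrightarrow> \<bar>u0ext u0 y - node_val N k\<bar> \<le> osc N k"
    by (auto simp: osc_def)
qed

lemma node_val_0 [simp]: "node_val N 0 = 0"
  by (simp add: node_val_def outside)

lemma node_val_N: "N \<ge> 1 \<Longrightarrow> node_val N N = 0"
  by (simp add: node_val_def outside node_N)

lemma abs_node_val_Suc_sub_le:
  assumes N: "N \<ge> 1"
  shows "\<bar>node_val N (Suc k) - node_val N k\<bar> \<le> osc N k"
proof -
  have "node N (Suc k) \<in> {node N k..node N (Suc k)}"
    using mesh_pos[OF N] by (simp add: node_Suc)
  then show ?thesis
    using osc_point_maximises(2)[OF N] by (simp add: node_val_def)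
qed

lemma classical_solution_eq_0_outside:
  assumes t: "t \<in> {0<..<T}" and "x < char_map F u0 p t \<or> char_map F u0 q t \<le> x"
  shows "classical_solution F u0 x t = 0"
  using assms char_inv_less_iff[OF t, of x p] char_inv_less_iff[OF t, of x q]
  by (auto simp: char_map_char_inv(2)[OF t] outside)

lemma abs_classical_solution_sub_node_val_le:
  assumes N: "N \<ge> 1" and t: "t \<in> {0<..<T}"
    and "char_map F u0 (node N k) t \<le> x" "x < char_map F u0 (node N (Suc k)) t"
  shows "\<bar>classical_solution F u0 x t - node_val N k\<bar> \<le> osc N k"
proof -
  have "char_inv t x \<in> {node N k..node N (Suc k)}"
    using assms char_inv_less_iff[OF t, of x "node N k"] char_inv_less_iff[OF t, of x "node N (Suc k)"]
    by auto
  then show ?thesis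
    using osc_point_maximises(2)[OF N] by (simp add: char_map_char_inv(2)[OF t])
qed

text \<open>The nodes interlaced with the points of maximal oscillation form a partition of [p, q],
  on which the oscillations are increments of u0.\<close>

lemma sum_osc_le_TV:
  assumes N: "N \<ge> 1"
  shows "(\<Sum>k<N. osc N k) \<le> TV"
proof -
  define f where "f i = (if even i then node N (i div 2) else osc_point N (i div 2))" for i
  define xs where "xs = map f [0..<2 * N]"
  have "f i \<le> f (Suc i)" for i
    using osc_point_maximises(1)[OF N, of "i div 2"] by (cases "even i") (auto simp: f_def elim: oddE)
  then have "mono f" by (rule mono_iff_le_Suc[THEN iffD2, rule_format])
  then have sorted: "sorted xs"
    by (auto simp: xs_def sorted_iff_nth_mono monoD)
  have f_support: "f i \<in> {p..q}" if "i < 2 * N" for i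
  proof -
    have "i div 2 < N" using that by simp
    then show ?thesis
      using node_in_support[OF N, of "i div 2"] node_in_support[OF N, of "Suc (i div 2)"]
        osc_point_maximises(1)[OF N, of "i div 2"]
      by (auto simp: f_def)
  qed
  then have "set xs \<subseteq> {0<..<1}"
    using support_subset by (auto simp: xs_def)
  have "(\<Sum>k<N. osc N k) = (\<Sum>k<N. \<bar>u0 (f (Suc (2 * k))) - u0 (f (2 * k))\<bar>)"
  proof (rule sum.cong[OF refl])
    fix k assume "k \<in> {..<N}"
    then have "f (2 * k) \<in> {p..q}" "f (Suc (2 * k)) \<in> {p..q}"
      using f_support by auto
    then show "osc N k = \<bar>u0 (f (Suc (2 * k))) - u0 (f (2 * k))\<bar>"
      using u0ext_eq by (simp add: osc_def node_val_def f_def)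
  qed
  also have "\<dots> = (\<Sum>i\<in>(\<lambda>k. 2 * k) ` {..<N}. \<bar>u0 (f (Suc i)) - u0 (f i)\<bar>)"
    by (subst sum.reindex) (auto simp: inj_on_def)
  also have "\<dots> \<le> (\<Sum>i<2 * N - 1. \<bar>u0 (f (Suc i)) - u0 (f i)\<bar>)"
    by (rule sum_mono2) auto
  also have "\<dots> = (\<Sum>i<length xs - 1. \<bar>u0 (xs ! Suc i) - u0 (xs ! i)\<bar>)"
    by (intro sum.cong) (auto simp: xs_def)
  also have "\<dots> \<le> TV"
    by (rule variation_sum_le_TV) fact+
  finally show ?thesis .
qed

lemma char_map_node_gap_le:
  assumes N: "N \<ge> 1" and k: "k < N" and t: "t \<in> {0<..<T}"
  shows "char_map F u0 (node N (Suc k)) t - char_map F u0 (node N k) t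
    \<le> mesh N * (1 + T * sup_ddF * sup_du0)"
proof -
  let ?a = "node N k" and ?b = "node N (Suc k)"
  have ab: "?a \<in> {p..q}" "?b \<in> {p..q}" using node_in_support[OF N] k by auto
  have "\<bar>deriv F (u0 ?b) - deriv F (u0 ?a)\<bar> \<le> sup_ddF * \<bar>u0 ?b - u0 ?a\<bar>"
    by (rule abs_deriv_F_u0_diff_le[OF ab])
  also have "\<dots> \<le> sup_ddF * (sup_du0 * mesh N)"
    using abs_u0_diff_le[of ?a ?b] ab mesh_pos[OF N] sup_ddF_nonneg
    by (intro mult_left_mono) (auto simp: node_Suc)
  finally have gap: "\<bar>deriv F (u0 ?b) - deriv F (u0 ?a)\<bar> \<le> sup_ddF * (sup_du0 * mesh N)" .
  have "t * (deriv F (u0 ?b) - deriv F (u0 ?a)) \<le> t * \<bar>deriv F (u0 ?b) - deriv F (u0 ?a)\<bar>"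
    using t by (intro mult_left_mono) auto
  also have "\<dots> \<le> T * (sup_ddF * (sup_du0 * mesh N))"
    using t gap by (intro mult_mono) auto
  finally have "t * (deriv F (u0 ?b) - deriv F (u0 ?a)) \<le> T * (sup_ddF * (sup_du0 * mesh N))" .
  then show ?thesis
    using ab by (simp add: char_map_def u0ext_eq node_Suc algebra_simps)
qed

abbreviation approx_U :: "nat \<Rightarrow> nat \<Rightarrow> nat \<Rightarrow> factor" where
  "approx_U N \<equiv> ramp_sum_U N (real N) (\<lambda>k. node_val N (Suc k) - node_val N k)"

abbreviation approx_V :: "nat \<Rightarrow> nat \<Rightarrow> nat \<Rightarrow> factor" where
  "approx_V N \<equiv> ramp_sum_V N (real N) (\<lambda>k. node N (Suc k)) (\<lambda>k. deriv F (node_val N (Suc k)))"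

lemma lrnr_L1_error:
  assumes N: "N \<ge> 1" and t: "t \<in> {0<..<T}"
  defines "h \<equiv> lrnr_h [1, 2 * N, 1] 3 (approx_U N) (approx_V N) (shallow_gamma t) (shallow_theta t)"
  shows "set_integrable lborel {0<..<1} (\<lambda>x. classical_solution F u0 x t - h x)"
    "(LINT x:{0<..<1}|lborel. \<bar>classical_solution F u0 x t - h x\<bar>)
      \<le> 2 / real N * TV * (1 + T * sup_ddF * sup_du0)"
proof -
  define z where "z k = char_map F u0 (node N k) t" for k
  have h: "h = (\<lambda>x. \<Sum>k<N. (node_val N (Suc k) - node_val N k) * ramp (real N) (z (Suc k)) x)"
    unfolding h_def lrnr_h_ramp_sum z_def char_map_def node_val_def ..
  have z: "strict_mono z"
    using strict_mono_char_map[OF t] strict_mono_node[OF N] by (simp add: z_def strict_mono_def)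
  note error = ramp_sum_L1_error[OF z _ _ _ _ _ _ _ _ classical_solution_measurable[OF t],
      where w = "real N" and osc = "osc N" and v = "node_val N" and N = N and A = "{0<..<1}"]
  have bounds:
    "x < z 0 \<Longrightarrow> classical_solution F u0 x t = 0"
    "z N \<le> x \<Longrightarrow> classical_solution F u0 x t = 0"
    "z k \<le> x \<Longrightarrow> x < z (Suc k) \<Longrightarrow> \<bar>classical_solution F u0 x t - node_val N k\<bar> \<le> osc N k"
    for x k
    using classical_solution_eq_0_outside[OF t] abs_classical_solution_sub_node_val_le[OF N t]
    by (auto simp: z_def node_N[OF N])
  show "set_integrable lborel {0<..<1} (\<lambda>x. classical_solution F u0 x t - h x)"
    unfolding h using error bounds N abs_node_val_Suc_sub_le node_val_N by (auto simp: osc_def)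
  have "(\<Sum>k<N. osc N k * (z (Suc k) - z k)) \<le> (\<Sum>k<N. osc N k) * (mesh N * (1 + T * sup_ddF * sup_du0))"
    unfolding sum_distrib_right z_def
    by (intro sum_mono mult_left_mono char_map_node_gap_le[OF N _ t]) (auto simp: osc_def)
  also have "\<dots> \<le> TV * (1 / real N * (1 + T * sup_ddF * sup_du0))"
    using sum_osc_le_TV[OF N] mesh_le[OF N] mesh_pos[OF N] T sup_ddF_nonneg sup_du0_nonneg TV_nonneg
    by (intro mult_mono) (auto simp: osc_def sum_nonneg)
  finally have cells: "(\<Sum>k<N. osc N k * (z (Suc k) - z k)) \<le> TV * (1 + T * sup_ddF * sup_du0) / real N"
    by simp
  have "(\<Sum>k<N. osc N k) / real N \<le> TV * 1 / real N"
    using sum_osc_le_TV[OF N] by (simp add: divide_right_mono)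
  also have "\<dots> \<le> TV * (1 + T * sup_ddF * sup_du0) / real N"
    using TV_nonneg T sup_ddF_nonneg sup_du0_nonneg by (intro divide_right_mono mult_left_mono) auto
  finally have ramps: "(\<Sum>k<N. osc N k) / real N \<le> TV * (1 + T * sup_ddF * sup_du0) / real N" .
  show "(LINT x:{0<..<1}|lborel. \<bar>classical_solution F u0 x t - h x\<bar>)
      \<le> 2 / real N * TV * (1 + T * sup_ddF * sup_du0)"
    unfolding h using error bounds N abs_node_val_Suc_sub_le node_val_N cells ramps
    by (auto simp: osc_def field_simps)
qed

end

lemma lrnr_approximates_classical_solution:
  fixes K :: nat and u0 F :: "real \<Rightarrow> real" and T :: real
  assumes K: "K \<ge> 1" and "smooth_fun F" "u0 C1_differentiable_on {0<..<1}"
    "bounded_variation_on u0 {0<..<1}" and support: "compact_support_in u0 {0<..<1}"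
    and "T > 0" "\<forall>t\<in>{0<..<T}. strict_mono_on {0<..<1} (\<lambda>y. char_map F u0 y t)"
  shows "\<exists>ws U V Cs Ds (\<gamma>::real \<Rightarrow> nat \<Rightarrow> real list) (\<theta>::real \<Rightarrow> nat \<Rightarrow> real list).
    is_lrnr 2 ws 3 U V Cs Ds \<and>
    real K \<le> real (lrnr_dof 2 3 U V) \<and> real (lrnr_dof 2 3 U V) \<le> 33 * real K \<and>
    real K \<le> real (lrnr_width ws) \<and> real (lrnr_width ws) \<le> 33 * real K \<and>
    (\<forall>l\<in>{1..2}. \<forall>i<3. \<exists>a b. \<forall>t. \<gamma> t l ! i = a + b * t) \<and>
    (\<forall>l\<in>{1..2}. \<forall>i<3. \<exists>a b. \<forall>t. \<theta> t l ! i = a + b * t) \<and>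
    (\<forall>t\<in>{0<..<T}.
       lrnr_coeffs_ok 2 Cs Ds (\<gamma> t) (\<theta> t) \<and>
       set_integrable lborel {0<..<1} (\<lambda>x. classical_solution F u0 x t - lrnr_h ws 3 U V (\<gamma> t) (\<theta> t) x) \<and>
       (LINT x:{0<..<1}|lborel. \<bar>classical_solution F u0 x t - lrnr_h ws 3 U V (\<gamma> t) (\<theta> t) x\<bar>)
         \<le> 2 / real K * total_variation u0 {0<..<1} *
           (1 + T * (SUP v\<in>u0 ` {0<..<1}. \<bar>deriv (deriv F) v\<bar>) * (SUP x\<in>{0<..<1}. \<bar>deriv u0 x\<bar>)))"
proof -
  obtain p q where "0 < p" "p < q" "q < 1" "\<And>y. y \<le> p \<or> q \<le> y \<Longrightarrow> u0ext u0 y = 0"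
    using compact_support_in_unit_interval[OF support] by blast
  then interpret characteristics_data F u0 p q T
    using assms by unfold_locales auto
  show ?thesis
    by (rule exI[of _ "[1, 2 * K, 1]"], rule exI[of _ "approx_U K"], rule exI[of _ "approx_V K"],
        rule exI[of _ shallow_coeffs], rule exI[of _ shallow_coeffs],
        rule exI[of _ shallow_gamma], rule exI[of _ shallow_theta],
        intro conjI shallow_coeffs_affine ballI is_lrnr_ramp_sum lrnr_coeffs_ok_shallow lrnr_L1_error[OF K])
      (use K in \<open>simp_all add: lrnr_dof_ramp_sum lrnr_width_def\<close>)
qed

theorem theorem4p6:
  shows "\<exists>C c1 c2 :: real. C > 0 \<and> c1 > 0 \<and> c2 > 0 \<and>
    (\<forall>(K::nat) (u0::real \<Rightarrow> real) (F::real \<Rightarrow> real) (T::real).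
      K \<ge> 1 \<and> smooth_fun F \<and> strictly_convex F \<and>
      u0 C1_differentiable_on {0<..<1} \<and>
      bounded_variation_on u0 {0<..<1} \<and> compact_support_in u0 {0<..<1} \<and>
      T > 0 \<and>
      (\<forall>t\<in>{0<..<T}. strict_mono_on {0<..<1} (\<lambda>y. char_map F u0 y t))
      \<longrightarrow>
      (\<exists>ws U V Cs Ds (\<gamma>::real \<Rightarrow> nat \<Rightarrow> real list) (\<theta>::real \<Rightarrow> nat \<Rightarrow> real list).
         is_lrnr 2 ws 3 U V Cs Ds \<and>
         c1 * real K \<le> real (lrnr_dof 2 3 U V) \<and> real (lrnr_dof 2 3 U V) \<le> c2 * real K \<and>
         c1 * real K \<le> real (lrnr_width ws) \<and> real (lrnr_width ws) \<le> c2 * real K \<and>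
         (\<forall>l\<in>{1..2}. \<forall>i<3. \<exists>a b. \<forall>t. \<gamma> t l ! i = a + b * t) \<and>
         (\<forall>l\<in>{1..2}. \<forall>i<3. \<exists>a b. \<forall>t. \<theta> t l ! i = a + b * t) \<and>
         (\<forall>t\<in>{0<..<T}.
            lrnr_coeffs_ok 2 Cs Ds (\<gamma> t) (\<theta> t) \<and>
            set_integrable lborel {0<..<1}
              (\<lambda>x. classical_solution F u0 x t - lrnr_h ws 3 U V (\<gamma> t) (\<theta> t) x) \<and>
            (LINT x:{0<..<1}|lborel.
               \<bar>classical_solution F u0 x t - lrnr_h ws 3 U V (\<gamma> t) (\<theta> t) x\<bar>)
            \<le> C / real K * total_variation u0 {0<..<1} *
               (1 + T * (SUP v\<in>u0 ` {0<..<1}. \<bar>deriv (deriv F) v\<bar>)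
                      * (SUP x\<in>{0<..<1}. \<bar>deriv u0 x\<bar>)))))"
  by (intro exI[of _ "2::real"] exI[of _ "1::real"] exI[of _ "33::real"] conjI allI impI; (elim conjE)?)
    (simp_all only: mult_1 lrnr_approximates_classical_solution)

end
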